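(* Let $\xi_m>0$ and $0<\mu\le\xi_m$, and define for $\tau>0$ $$f(\mu,\tau)=2\tau\ln\frac{\cosh(\xi_m/2\tau)}{\cosh(\mu/2\tau)}+\mu\int_0^{\mu}\tanh\Big(\frac{\xi}{2\tau}\Big)\frac{d\xi}{\xi}.$$ Then $\partial f/\partial\tau<0$, $\partial f/\partial\mu>0$, $\lim_{\tau\to0^+}f(\mu,\tau)=\infty$ and $\lim_{\tau\to\infty}f(\mu,\tau)=0$. Consequently, for every $\lambda>0$ the equation $\xi_m/\lambda=f(\mu,\tau)$ has a unique positive solution $\tau=T_c(\mu,\lambda)$. *)

theory Defs
  imports "HOL-Analysis.Analysis"
begin

text \<open>The integral is the Henstock-Kurzweil integral over [0, mu]; the integrand
  tanh(xi/(2 tau))/xi is bounded and continuous on (0, mu] (its value at the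
  single point 0 is irrelevant).\<close>
definition gapf :: "real \<Rightarrow> real \<Rightarrow> real \<Rightarrow> real" where
  "gapf xim \<mu> \<tau> =
     2 * \<tau> * ln (cosh (xim / (2 * \<tau>)) / cosh (\<mu> / (2 * \<tau>)))
     + \<mu> * integral {0..\<mu>} (\<lambda>\<xi>. tanh (\<xi> / (2 * \<tau>)) / \<xi>)"

end

theory Submission
  imports Defs "HOL-Real_Asymp.Real_Asymp"
begin

text \<open>Substituting \<open>\<xi> = 2\<tau>u\<close> turns the integral into \<open>Ti(\<mu>/2\<tau>)\<close> with
  \<open>Ti x = \<integral>\<^sub>0\<^sup>x tanh u / u du\<close> (\<open>tanh_integral\<close>), so that with \<open>a = \<xi>\<^sub>m/2\<tau>\<close> and \<open>b = \<mu>/2\<tau>\<close>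
  \<open>f = 2\<tau>(ln cosh a - ln cosh b) + \<mu> Ti(b)\<close>.
  Differentiating, \<open>\<partial>f/\<partial>\<mu> = Ti(b) > 0\<close> and
  \<open>\<partial>f/\<partial>\<tau> = 2(ln cosh a - a tanh a) - 2 ln cosh b < 0\<close>, because
  \<open>x \<mapsto> ln cosh x - x tanh x\<close> decreases from its value 0 at 0.
  As \<open>\<tau> \<rightarrow> 0\<close>, \<open>f \<ge> \<mu> Ti(b) \<ge> \<mu> tanh 1 ln b \<rightarrow> \<infinity>\<close>; as \<open>\<tau> \<rightarrow> \<infinity>\<close>,
  \<open>0 \<le> f \<le> (\<xi>\<^sub>m\<^sup>2 + \<mu>\<^sup>2)/2\<tau>\<close> by \<open>ln cosh a \<le> a\<^sup>2\<close> and \<open>Ti(b) \<le> b\<close>.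
  A continuous strictly decreasing function running from \<open>\<infinity>\<close> down to 0 takes
  every positive value exactly once.\<close>

lemma tanh_real_le_self:
  fixes x :: real
  assumes "0 \<le> x"
  shows "tanh x \<le> x"
proof -
  have "0 - tanh 0 \<le> x - tanh x"
  proof (rule DERIV_nonneg_imp_nondecreasing[OF assms])
    fix y :: real
    have "((\<lambda>x. x - tanh x) has_real_derivative tanh y ^ 2) (at y)"
      by (auto intro!: derivative_eq_intros)
    then show "\<exists>d. ((\<lambda>x. x - tanh x) has_real_derivative d) (at y) \<and> 0 \<le> d"
      by auto
  qed
  then show ?thesis by simp
qed

lemma ln_cosh_less_mult_tanh:
  fixes x :: real
  assumes "0 < x"
  shows "ln (cosh x) < x * tanh x"
proof -
  let ?g = "\<lambda>x::real. ln (cosh x) - x * tanh x"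
  have "?g x < ?g 0"
  proof (rule DERIV_neg_imp_decreasing_open[OF assms])
    fix y :: real
    assume y: "0 < y" "y < x"
    have "(?g has_real_derivative - y * (1 - tanh y ^ 2)) (at y)"
      by (auto intro!: derivative_eq_intros simp: tanh_def field_simps power2_eq_square)
    moreover have "tanh y ^ 2 < 1"
      using tanh_real_lt_1[of y] y by (simp add: abs_square_less_1)
    ultimately show "\<exists>d. (?g has_real_derivative d) (at y) \<and> d < 0"
      using y by (intro exI conjI) auto
  qed (intro continuous_intros, auto)
  then show ?thesis by simp
qed

lemma ln_cosh_pos:
  fixes x :: real
  assumes "0 < x"
  shows "0 < ln (cosh x)"
  using cosh_real_nonneg_less_iff[of 0 x] assms by simp

lemma ln_cosh_le_square:
  fixes x :: real
  assumes "0 \<le> x"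
  shows "ln (cosh x) \<le> x\<^sup>2"
proof (cases "x = 0")
  case False
  then have "ln (cosh x) < x * tanh x"
    using assms by (intro ln_cosh_less_mult_tanh) auto
  also have "\<dots> \<le> x * x"
    using tanh_real_le_self[OF assms] assms by (rule mult_left_mono)
  finally show ?thesis by (simp add: power2_eq_square)
qed simp

definition tanhc :: "real \<Rightarrow> real" where
  "tanhc u = (if u = 0 then 1 else tanh u / u)"

text \<open>The base point \<open>-1\<close> puts 0 in the interior of the domain of
  integration, so that the derivative below is two-sided at 0.\<close>
definition tanh_integral :: "real \<Rightarrow> real" where
  "tanh_integral x = integral {-1..x} tanhc - integral {-1..0} tanhc"

lemma isCont_tanhc: "isCont tanhc x"
proof (cases "x = 0")
  case True
  have "((\<lambda>u. tanh u) has_real_derivative 1) (at 0)"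
    by (auto intro!: derivative_eq_intros)
  then have "((\<lambda>u::real. tanh u / u) \<longlongrightarrow> 1) (at 0)"
    using DERIV_def[THEN iffD1] by fastforce
  moreover have "eventually (\<lambda>u. tanh u / u = tanhc u) (at 0)"
    by (simp add: eventually_at_filter tanhc_def)
  ultimately have "(tanhc \<longlongrightarrow> 1) (at 0)"
    by (rule tendsto_cong[THEN iffD1, rotated])
  then show ?thesis
    using True by (simp add: isCont_def tanhc_def)
next
  case False
  have "eventually (\<lambda>u. u \<in> - {0}) (nhds x)"
    using False by (intro eventually_nhds_in_open) auto
  then have "eventually (\<lambda>u. tanhc u = tanh u / u) (nhds x)"
    by eventually_elim (simp add: tanhc_def)
  moreover have "isCont (\<lambda>u. tanh u / u) x"
    using False by (intro continuous_intros) auto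
  ultimately show ?thesis
    by (simp add: isCont_cong)
qed

lemma tanhc_pos: "0 < tanhc u"
  by (cases "u = 0") (auto simp: tanhc_def zero_less_divide_iff not_less_iff_gr_or_eq)

lemma tanhc_le_1: "0 \<le> u \<Longrightarrow> tanhc u \<le> 1"
  using tanh_real_le_self[of u] by (auto simp: tanhc_def)

lemma tanh_integral_0 [simp]: "tanh_integral 0 = 0"
  by (simp add: tanh_integral_def)

lemma has_real_derivative_tanh_integral:
  assumes "-1 < x"
  shows "(tanh_integral has_real_derivative tanhc x) (at x)"
proof -
  have "continuous_on {-1..x+1} tanhc"
    by (intro continuous_at_imp_continuous_on ballI isCont_tanhc)
  then have "((\<lambda>y. integral {-1..y} tanhc) has_real_derivative tanhc x) (at x within {-1..x+1})"
    using assms by (intro integral_has_real_derivative) auto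
  moreover have "at x within {-1..x+1} = at x"
    using assms by (intro at_within_interior) auto
  ultimately show ?thesis
    unfolding tanh_integral_def[abs_def] by (auto intro!: derivative_eq_intros)
qed

lemma has_real_derivative_tanh_integral_compose [derivative_intros]:
  assumes "(f has_real_derivative f') (at x within S)" "-1 < f x"
  shows "((\<lambda>y. tanh_integral (f y)) has_real_derivative tanhc (f x) * f') (at x within S)"
  using DERIV_chain2[OF has_real_derivative_tanh_integral[OF assms(2)] assms(1)] .

lemma tanh_integral_pos:
  assumes "0 < x"
  shows "0 < tanh_integral x"
proof -
  have "tanh_integral 0 < tanh_integral x"
    by (rule DERIV_pos_imp_increasing[OF assms])
      (use has_real_derivative_tanh_integral tanhc_pos in force)
  then show ?thesis by simp
qed

lemma tanh_integral_le_self: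
  assumes "0 \<le> x"
  shows "tanh_integral x \<le> x"
proof -
  have "0 - tanh_integral 0 \<le> x - tanh_integral x"
  proof (rule DERIV_nonneg_imp_nondecreasing[OF assms])
    fix y :: real
    assume y: "0 \<le> y" "y \<le> x"
    then have "((\<lambda>y. y - tanh_integral y) has_real_derivative 1 - tanhc y) (at y)"
      by (intro DERIV_diff DERIV_ident has_real_derivative_tanh_integral) auto
    then show "\<exists>d. ((\<lambda>y. y - tanh_integral y) has_real_derivative d) (at y) \<and> 0 \<le> d"
      using tanhc_le_1[of y] y by auto
  qed
  then show ?thesis by simp
qed

lemma tanh_integral_ge_ln:
  assumes "1 \<le> x"
  shows "tanh 1 * ln x \<le> tanh_integral x"
proof -
  let ?g = "\<lambda>y. tanh_integral y - tanh 1 * ln y"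
  have "?g 1 \<le> ?g x"
  proof (rule DERIV_nonneg_imp_nondecreasing[OF assms])
    fix y :: real
    assume y: "1 \<le> y" "y \<le> x"
    then have "(?g has_real_derivative tanhc y - tanh 1 * (1 / y)) (at y)"
      by (intro DERIV_diff DERIV_cmult has_real_derivative_tanh_integral DERIV_ln_divide) auto
    moreover have "tanh 1 * (1 / y) \<le> tanhc y"
      using y by (auto simp: tanhc_def divide_right_mono)
    ultimately show "\<exists>d. (?g has_real_derivative d) (at y) \<and> 0 \<le> d"
      by auto
  qed
  then show ?thesis
    using tanh_integral_pos[of 1] by simp
qed

lemma integral_tanh_scaled:
  assumes "0 < \<tau>" "0 \<le> m"
  shows "integral {0..m} (\<lambda>\<xi>. tanh (\<xi> / (2 * \<tau>)) / \<xi>) = tanh_integral (m / (2 * \<tau>))"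
proof -
  have "((\<lambda>\<xi>. tanh_integral (\<xi> / (2 * \<tau>))) has_vector_derivative tanhc (\<xi> / (2 * \<tau>)) / (2 * \<tau>))
          (at \<xi> within {0..m})" if "\<xi> \<in> {0..m}" for \<xi>
  proof -
    have "((\<lambda>\<xi>. tanh_integral (\<xi> / (2 * \<tau>))) has_real_derivative tanhc (\<xi> / (2 * \<tau>)) / (2 * \<tau>)) (at \<xi>)"
      using that assms by (auto intro!: derivative_eq_intros intro: less_le_trans[of "-1" 0])
    then show ?thesis
      by (simp add: has_real_derivative_iff_has_vector_derivative[symmetric] has_field_derivative_at_within)
  qed
  then have "((\<lambda>\<xi>. tanhc (\<xi> / (2 * \<tau>)) / (2 * \<tau>)) has_integral tanh_integral (m / (2 * \<tau>))) {0..m}"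
    using fundamental_theorem_of_calculus[OF assms(2)] by fastforce
  then have "((\<lambda>\<xi>. tanh (\<xi> / (2 * \<tau>)) / \<xi>) has_integral tanh_integral (m / (2 * \<tau>))) {0..m}"
    by (rule has_integral_spike_finite[of "{0}", rotated 2]) (use assms in \<open>auto simp: tanhc_def\<close>)
  then show ?thesis
    by (rule integral_unique)
qed

lemma gapf_eq_tanh_integral:
  assumes "0 < \<tau>" "0 \<le> \<mu>"
  shows "gapf xim \<mu> \<tau> = 2 * \<tau> * (ln (cosh (xim / (2 * \<tau>))) - ln (cosh (\<mu> / (2 * \<tau>))))
                         + \<mu> * tanh_integral (\<mu> / (2 * \<tau>))"
  using assms by (simp add: gapf_def integral_tanh_scaled ln_div)

lemma gapf_has_derivative_tau:
  assumes "0 < \<mu>" "0 < \<tau>"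
  shows "((\<lambda>t. gapf xim \<mu> t) has_real_derivative
           2 * (ln (cosh (xim / (2 * \<tau>))) - xim / (2 * \<tau>) * tanh (xim / (2 * \<tau>)))
           - 2 * ln (cosh (\<mu> / (2 * \<tau>)))) (at \<tau>)"
proof -
  have "((\<lambda>t. 2 * t * (ln (cosh (xim / (2 * t))) - ln (cosh (\<mu> / (2 * t))))
                   + \<mu> * tanh_integral (\<mu> / (2 * t))) has_real_derivative
           2 * (ln (cosh (xim / (2 * \<tau>))) - xim / (2 * \<tau>) * tanh (xim / (2 * \<tau>)))
           - 2 * ln (cosh (\<mu> / (2 * \<tau>)))) (at \<tau>)"
    using assms
    by (auto intro!: derivative_eq_intros
        simp: tanhc_def tanh_def field_simps power2_eq_square)
  then show ?thesis
    by (rule has_field_derivative_transform_within_open[where S = "{0<..}"])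
      (use assms in \<open>auto simp: gapf_eq_tanh_integral\<close>)
qed

lemma gapf_has_derivative_mu:
  assumes "0 < \<mu>" "0 < \<tau>"
  shows "((\<lambda>m. gapf xim m \<tau>) has_real_derivative tanh_integral (\<mu> / (2 * \<tau>))) (at \<mu>)"
proof -
  have "((\<lambda>m. 2 * \<tau> * (ln (cosh (xim / (2 * \<tau>))) - ln (cosh (m / (2 * \<tau>))))
                   + m * tanh_integral (m / (2 * \<tau>))) has_real_derivative
           tanh_integral (\<mu> / (2 * \<tau>))) (at \<mu>)"
    using assms
    by (auto intro!: derivative_eq_intros
        simp: tanhc_def tanh_def field_simps)
  then show ?thesis
    by (rule has_field_derivative_transform_within_open[where S = "{0<..}"])
      (use assms in \<open>auto simp: gapf_eq_tanh_integral\<close>)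
qed

lemma gapf_has_negative_derivative_tau:
  assumes "0 < xim" "0 < \<mu>" "0 < \<tau>"
  shows "\<exists>D. ((\<lambda>t. gapf xim \<mu> t) has_real_derivative D) (at \<tau>) \<and> D < 0"
proof -
  define a b where "a = xim / (2 * \<tau>)" and "b = \<mu> / (2 * \<tau>)"
  have "ln (cosh a) < a * tanh a"
    using assms by (intro ln_cosh_less_mult_tanh) (simp add: a_def)
  moreover have "0 < ln (cosh b)"
    using assms by (intro ln_cosh_pos) (simp add: b_def)
  ultimately have "2 * (ln (cosh a) - a * tanh a) - 2 * ln (cosh b) < 0"
    by argo
  then show ?thesis
    using gapf_has_derivative_tau[OF assms(2,3), of xim] unfolding a_def b_def by blast
qed

lemma gapf_has_positive_derivative_mu:
  assumes "0 < \<mu>" "0 < \<tau>"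
  shows "\<exists>D. ((\<lambda>m. gapf xim m \<tau>) has_real_derivative D) (at \<mu>) \<and> 0 < D"
  using gapf_has_derivative_mu[OF assms] tanh_integral_pos[of "\<mu> / (2 * \<tau>)"] assms by auto

lemma gapf_strict_antimono_tau:
  assumes "0 < xim" "0 < \<mu>" "0 < s" "s < t"
  shows "gapf xim \<mu> t < gapf xim \<mu> s"
  using gapf_has_negative_derivative_tau[OF assms(1,2)] assms(3,4)
  by (intro DERIV_neg_imp_decreasing[OF assms(4)]) auto

lemma continuous_on_gapf_tau:
  assumes "0 < \<mu>"
  shows "continuous_on {0<..} (\<lambda>t. gapf xim \<mu> t)"
  using gapf_has_derivative_tau[OF assms]
  by (intro continuous_at_imp_continuous_on ballI DERIV_isCont) auto

lemma gapf_ge_mult_tanh_integral: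
  assumes "0 \<le> \<mu>" "\<mu> \<le> xim" "0 < \<tau>"
  shows "\<mu> * tanh_integral (\<mu> / (2 * \<tau>)) \<le> gapf xim \<mu> \<tau>"
proof -
  have "cosh (\<mu> / (2 * \<tau>)) \<le> cosh (xim / (2 * \<tau>))"
    using assms by (subst cosh_real_nonneg_le_iff) (auto simp: divide_right_mono)
  then show ?thesis
    using assms by (simp add: gapf_eq_tanh_integral)
qed

lemma gapf_le:
  assumes "0 \<le> xim" "0 \<le> \<mu>" "0 < \<tau>"
  shows "gapf xim \<mu> \<tau> \<le> (xim\<^sup>2 + \<mu>\<^sup>2) / (2 * \<tau>)"
proof -
  define a b where "a = xim / (2 * \<tau>)" and "b = \<mu> / (2 * \<tau>)"
  have "0 \<le> a" "0 \<le> b"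
    using assms by (simp_all add: a_def b_def)
  then have "ln (cosh a) - ln (cosh b) \<le> a\<^sup>2" and "tanh_integral b \<le> b"
    using ln_cosh_le_square[of a] ln_ge_zero[OF cosh_real_ge_1[of b]] tanh_integral_le_self[of b]
    by linarith+
  then have "gapf xim \<mu> \<tau> \<le> 2 * \<tau> * a\<^sup>2 + \<mu> * b"
    using assms unfolding gapf_eq_tanh_integral[OF assms(3,2)] a_def[symmetric] b_def[symmetric]
    by (intro add_mono mult_left_mono) auto
  also have "\<dots> = (xim\<^sup>2 + \<mu>\<^sup>2) / (2 * \<tau>)"
    using assms by (simp add: a_def b_def field_simps power2_eq_square)
  finally show ?thesis .
qed

lemma gapf_tendsto_at_right_0:
  assumes "0 < \<mu>" "\<mu> \<le> xim"
  shows "filterlim (\<lambda>t. gapf xim \<mu> t) at_top (at_right 0)"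
proof (rule filterlim_at_top_mono)
  have "filterlim (\<lambda>t::real. ln (\<mu> / (2 * t))) at_top (at_right 0)"
    using assms by real_asymp
  then show "filterlim (\<lambda>t. \<mu> * tanh 1 * ln (\<mu> / (2 * t))) at_top (at_right 0)"
    using assms by (intro filterlim_tendsto_pos_mult_at_top[OF tendsto_const]) auto
  have "eventually (\<lambda>t. t \<in> {0<..<\<mu> / 2}) (at_right 0)"
    using assms by (intro eventually_at_rightI[of 0 "\<mu> / 2"]) auto
  then show "eventually (\<lambda>t. \<mu> * tanh 1 * ln (\<mu> / (2 * t)) \<le> gapf xim \<mu> t) (at_right 0)"
  proof eventually_elim
    case (elim t)
    then have "1 \<le> \<mu> / (2 * t)"
      by (simp add: field_simps)
    then have "\<mu> * tanh 1 * ln (\<mu> / (2 * t)) \<le> \<mu> * tanh_integral (\<mu> / (2 * t))"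
      using assms by (simp add: mult.assoc tanh_integral_ge_ln)
    also have "\<dots> \<le> gapf xim \<mu> t"
      using elim assms by (intro gapf_ge_mult_tanh_integral) auto
    finally show ?case .
  qed
qed

lemma gapf_tendsto_0_at_top:
  assumes "0 < \<mu>" "\<mu> \<le> xim"
  shows "((\<lambda>t. gapf xim \<mu> t) \<longlongrightarrow> 0) at_top"
proof (rule tendsto_sandwich)
  show "eventually (\<lambda>t. 0 \<le> gapf xim \<mu> t) at_top"
    using eventually_gt_at_top[of 0]
  proof eventually_elim
    case (elim t)
    then show ?case
      using gapf_ge_mult_tanh_integral[of \<mu> xim t] tanh_integral_pos[of "\<mu> / (2 * t)"] assms
      by (smt (verit) divide_pos_pos mult_pos_pos)
  qed
  show "eventually (\<lambda>t. gapf xim \<mu> t \<le> (xim\<^sup>2 + \<mu>\<^sup>2) / (2 * t)) at_top"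
    using eventually_gt_at_top[of 0] by eventually_elim (use assms in \<open>auto intro: gapf_le\<close>)
  show "((\<lambda>t. (xim\<^sup>2 + \<mu>\<^sup>2) / (2 * t)) \<longlongrightarrow> 0) at_top"
    by real_asymp
qed simp

lemma ex1_pos_preimage_if_decreasing:
  fixes f :: "real \<Rightarrow> real"
  assumes cont: "continuous_on {0<..} f"
    and decr: "\<And>s t. 0 < s \<Longrightarrow> s < t \<Longrightarrow> f t < f s"
    and lim_0: "filterlim f at_top (at_right 0)"
    and lim_top: "(f \<longlongrightarrow> L) at_top"
    and "L < c"
  shows "\<exists>!t. 0 < t \<and> c = f t"
proof -
  have "eventually (\<lambda>t. c < f t) (at_right 0)"
    using lim_0 by (simp add: filterlim_at_top_dense)
  then obtain t\<^sub>1 where t\<^sub>1: "0 < t\<^sub>1" "c < f t\<^sub>1"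
    by (metis eventually_at_right_field field_lbound_gt_zero less_numeral_extra(1))
  have "eventually (\<lambda>t. f t < c) at_top"
    using order_tendstoD(2)[OF lim_top \<open>L < c\<close>] .
  then obtain t\<^sub>2 where t\<^sub>2: "t\<^sub>1 \<le> t\<^sub>2" "f t\<^sub>2 < c"
    by (metis eventually_at_top_linorder linorder_le_cases order.refl)
  have "continuous_on {t\<^sub>1..t\<^sub>2} f"
    using cont by (rule continuous_on_subset) (use t\<^sub>1 in auto)
  then obtain t where t: "t\<^sub>1 \<le> t" "t \<le> t\<^sub>2" "f t = c"
    using IVT2'[of f t\<^sub>2 c t\<^sub>1] t\<^sub>1 t\<^sub>2 by force
  show ?thesis
  proof (rule ex1I[of _ t])
    show "0 < t \<and> c = f t"
      using t t\<^sub>1 by auto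
    fix s
    assume "0 < s \<and> c = f s"
    then show "s = t"
      using decr[of s t] decr[of t s] t t\<^sub>1 by (cases s t rule: linorder_cases) auto
  qed
qed

theorem mainTheorem8:
  fixes xim \<mu> :: real
  assumes "xim > 0" and "0 < \<mu>" and "\<mu> \<le> xim"
  shows "(\<forall>\<tau>>0. \<exists>D. ((\<lambda>t. gapf xim \<mu> t) has_real_derivative D) (at \<tau>) \<and> D < 0)
       \<and> (\<forall>\<tau>>0. \<exists>D. ((\<lambda>m. gapf xim m \<tau>) has_real_derivative D) (at \<mu>) \<and> D > 0)
       \<and> filterlim (\<lambda>t. gapf xim \<mu> t) at_top (at_right 0)
       \<and> ((\<lambda>t. gapf xim \<mu> t) \<longlongrightarrow> 0) at_top
       \<and> (\<forall>lam>0. \<exists>!\<tau>. \<tau> > 0 \<and> xim / lam = gapf xim \<mu> \<tau>)"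
proof (intro conjI allI impI)
  fix lam :: real
  assume "0 < lam"
  then show "\<exists>!\<tau>. \<tau> > 0 \<and> xim / lam = gapf xim \<mu> \<tau>"
    using assms
    by (intro ex1_pos_preimage_if_decreasing[where L = 0] continuous_on_gapf_tau
        gapf_strict_antimono_tau gapf_tendsto_at_right_0 gapf_tendsto_0_at_top) auto
qed (use assms gapf_has_negative_derivative_tau gapf_has_positive_derivative_mu
      gapf_tendsto_at_right_0 gapf_tendsto_0_at_top in auto)

end
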